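(* Let $p$ be a prime, $Y$ a $\mathbb{Q}$-vector space, $f:\mathbb{Q}_p\to Y$, $s\ge1$, $(N_1,\dots,N_s)\in\mathbb{Z}^s$ and $(a_1,\dots,a_s)\in\mathbb{Q}_p^s$. If $\Delta_{h_1h_2\cdots h_s}f(x)=0$ for all $x\in\mathbb{Q}_p$ and all $(h_1,\dots,h_s)\in\left(\mathbb{Q}_p\setminus(a_1+p^{-N_1}\mathbb{Z}_p)\right)\times\cdots\times\left(\mathbb{Q}_p\setminus(a_s+p^{-N_s}\mathbb{Z}_p)\right)$, then $\Delta_{h_1h_2\cdots h_s}f(x)=0$ for all $(x,h_1,\dots,h_s)\in\mathbb{Q}_p^{s+1}$.
   Context: $\mathbb{Q}_p$ is the field of $p$-adic numbers with $p$-adic absolute value $|\cdot|_p$, $\mathbb{Z}_p=\{x:|x|_p\le1\}$, and $a+p^{-N}\mathbb{Z}_p=\{a+p^{-N}z:z\in\mathbb{Z}_p\}$. $\Delta_hf(x)=f(x+h)-f(x)$ and $\Delta_{h_1h_2\cdots h_s}f(x)=\Delta_{h_1}\left(\Delta_{h_2\cdots h_s}f\right)(x)$ for $s\ge2$. *)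

theory Defs
  imports Complex_Main "HOL-Computational_Algebra.Primes"
begin

text \<open>An element x of Q_p is represented canonically by the family of its truncations
  r n = (sum of the digits of x below position n times p^i), i.e. the unique
  rational in [0, p^n) with denominator a power of p such that x - r n lies in p^n Z_p.
  The family determines x, and every family satisfying the conditions below arises
  from exactly one x in Q_p.\<close>

definition rmod :: "rat \<Rightarrow> rat \<Rightarrow> rat" where
  "rmod a m = a - m * of_int \<lfloor>a / m\<rfloor>"

definition Qp :: "nat \<Rightarrow> (int \<Rightarrow> rat) set" where
  "Qp p = {r. (\<forall>n. 0 \<le> r n \<and> r n < (of_nat p) powi n)
             \<and> (\<forall>n. r n = rmod (r (n + 1)) ((of_nat p) powi n))
             \<and> (\<exists>M. \<forall>n\<le>M. r n = 0)}"

definition padd :: "nat \<Rightarrow> (int \<Rightarrow> rat) \<Rightarrow> (int \<Rightarrow> rat) \<Rightarrow> (int \<Rightarrow> rat)" where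
  "padd p x y = (\<lambda>n. rmod (x n + y n) ((of_nat p) powi n))"

text \<open>z lies in p^k Z_p, i.e. |z|_p \<le> p^(-k), iff its truncation at k vanishes.\<close>
definition in_pZp :: "nat \<Rightarrow> int \<Rightarrow> (int \<Rightarrow> rat) \<Rightarrow> bool" where
  "in_pZp p k z \<longleftrightarrow> z k = 0"

definition pcoset :: "nat \<Rightarrow> (int \<Rightarrow> rat) \<Rightarrow> int \<Rightarrow> (int \<Rightarrow> rat) set" where
  "pcoset p a N = {padd p a z | z. z \<in> Qp p \<and> in_pZp p (- N) z}"

fun pdelta :: "nat \<Rightarrow> (int \<Rightarrow> rat) list \<Rightarrow> ((int \<Rightarrow> rat) \<Rightarrow> 'y::ab_group_add)
                 \<Rightarrow> (int \<Rightarrow> rat) \<Rightarrow> 'y" where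
  "pdelta p [] f x = f x"
| "pdelta p (h # hs) f x = pdelta p hs f (padd p x h) - pdelta p hs f x"

end

theory Submission
  imports Defs
begin

text \<open>
  Difference operators are additive in each step:
    Delta_{..,u+v,..} f (x) = Delta_{..,u,..} f (x + v) + Delta_{..,v,..} f (x).
  Moreover every h in Q_p splits as h = u + v with neither u nor v in the
  excluded coset a + p^(-N) Z_p: membership in that coset prescribes the
  truncation at level -N, and choosing u = p^j for a suitable j < -N makes both
  truncations of u and of v = h - u differ from the prescribed value.
  Hence if the iterated difference vanishes whenever the steps k, k+1, ..., s-1
  avoid their cosets, it also vanishes when only k+1, ..., s-1 do; releasing
  the steps one by one gives vanishing for all steps.
\<close>

lemma rmod_shift: "rmod (c + m * of_int k) m = rmod c m"
proof (cases "m = 0")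
  case True then show ?thesis by (simp add: rmod_def)
next
  case False
  have "(c + m * of_int k) / m = c/m + of_int k" using False by (simp add: field_simps)
  hence "\<lfloor>(c + m * of_int k) / m\<rfloor> = \<lfloor>c/m\<rfloor> + k" by simp
  thus ?thesis by (simp add: rmod_def algebra_simps)
qed

lemma rmod_add_right: "rmod (a + rmod b m) m = rmod (a + b) m"
proof -
  have "a + rmod b m = (a + b) + m * of_int (- \<lfloor>b/m\<rfloor>)" by (simp add: rmod_def)
  thus ?thesis by (metis rmod_shift)
qed

lemma rmod_add_left: "rmod (rmod a m + b) m = rmod (a + b) m"
  using rmod_add_right[of b a m] by (simp add: add.commute)

lemma rmod_diff_right: "rmod (a - rmod b m) m = rmod (a - b) m"
proof -
  have "a - rmod b m = (a - b) + m * of_int \<lfloor>b/m\<rfloor>" by (simp add: rmod_def)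
  thus ?thesis by (metis rmod_shift)
qed

lemma rmod_diff_left: "rmod (rmod a m - b) m = rmod (a - b) m"
proof -
  have "rmod a m - b = (a - b) + m * of_int (- \<lfloor>a/m\<rfloor>)" by (simp add: rmod_def)
  thus ?thesis by (metis rmod_shift)
qed

lemma rmod_id: "0 \<le> a \<Longrightarrow> a < m \<Longrightarrow> rmod a m = a"
  by (simp add: rmod_def floor_eq_iff)

lemma rmod_bounds:
  assumes m: "0 < m"
  shows "0 \<le> rmod a m \<and> rmod a m < m"
proof -
  have "of_int \<lfloor>a/m\<rfloor> \<le> a/m" "a/m < of_int \<lfloor>a/m\<rfloor> + 1"
    using floor_correct[of "a/m"] by simp_all
  with m have "m * of_int \<lfloor>a/m\<rfloor> \<le> a" "a < m * (of_int \<lfloor>a/m\<rfloor> + 1)"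
    by (metis mult.commute pos_le_divide_eq, metis mult.commute pos_divide_less_eq)
  thus ?thesis by (simp add: rmod_def algebra_simps)
qed

lemma rmod_rmod_mult: "rmod (rmod a (m * of_int q)) m = rmod a m"
proof -
  have "rmod a (m * of_int q) = a + m * of_int (- (q * \<lfloor>a / (m * of_int q)\<rfloor>))"
    by (simp add: rmod_def algebra_simps)
  thus ?thesis by (metis rmod_shift)
qed

section \<open>The truncation model of Q_p\<close>

lemma QpD:
  assumes "x \<in> Qp p"
  shows "0 \<le> x n" "x n < of_nat p powi n" "x n = rmod (x (n+1)) (of_nat p powi n)"
  using assms unfolding Qp_def mem_Collect_eq by blast+

lemma Qp_eventually_zero: "x \<in> Qp p \<Longrightarrow> \<exists>M. \<forall>n\<le>M. x n = 0"
  unfolding Qp_def by blast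

lemma Qp_of_compatible_family:
  assumes p: "p > 0"
    and compat: "\<And>n. rmod (c (n+1)) (of_nat p powi n) = rmod (c n) (of_nat p powi n)"
    and zero: "\<And>n. n \<le> M \<Longrightarrow> c n = 0"
  shows "(\<lambda>n. rmod (c n) (of_nat p powi n)) \<in> Qp p"
proof -
  have step: "of_nat p powi (n+1) = (of_nat p powi n) * (of_int (int p) :: rat)" for n
    using p by (simp add: power_int_add_1)
  have "\<forall>n. 0 \<le> rmod (c n) (of_nat p powi n) \<and> rmod (c n) (of_nat p powi n) < of_nat p powi n"
    using rmod_bounds p by simp
  moreover have "rmod (c n) (of_nat p powi n)
      = rmod (rmod (c (n+1)) (of_nat p powi (n+1))) (of_nat p powi n)" for n
    unfolding step rmod_rmod_mult compat ..
  moreover have "\<forall>n\<le>M. rmod (c n) (of_nat p powi n) = 0"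
    using zero by (simp add: rmod_def)
  ultimately show ?thesis unfolding Qp_def by blast
qed

lemma padd_Qp:
  assumes p: "p > 0" and x: "x \<in> Qp p" and y: "y \<in> Qp p"
  shows "padd p x y \<in> Qp p"
proof -
  obtain M1 M2 where "\<forall>n\<le>M1. x n = 0" "\<forall>n\<le>M2. y n = 0"
    using Qp_eventually_zero x y by blast
  moreover have "rmod (x (n+1) + y (n+1)) (of_nat p powi n) = rmod (x n + y n) (of_nat p powi n)" for n
    using QpD(3)[OF x, of n] QpD(3)[OF y, of n]
    by (metis rmod_add_left rmod_add_right)
  ultimately show ?thesis
    unfolding padd_def by (intro Qp_of_compatible_family[OF p, where M = "min M1 M2"]) auto
qed

definition psub :: "nat \<Rightarrow> (int \<Rightarrow> rat) \<Rightarrow> (int \<Rightarrow> rat) \<Rightarrow> (int \<Rightarrow> rat)" where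
  "psub p h u = (\<lambda>n. rmod (h n - u n) (of_nat p powi n))"

lemma psub_Qp:
  assumes p: "p > 0" and x: "x \<in> Qp p" and y: "y \<in> Qp p"
  shows "psub p x y \<in> Qp p"
proof -
  obtain M1 M2 where "\<forall>n\<le>M1. x n = 0" "\<forall>n\<le>M2. y n = 0"
    using Qp_eventually_zero x y by blast
  moreover have "rmod (x (n+1) - y (n+1)) (of_nat p powi n) = rmod (x n - y n) (of_nat p powi n)" for n
    using QpD(3)[OF x, of n] QpD(3)[OF y, of n]
    by (metis rmod_diff_left rmod_diff_right)
  ultimately show ?thesis
    unfolding psub_def by (intro Qp_of_compatible_family[OF p, where M = "min M1 M2"]) auto
qed

lemma padd_psub:
  assumes h: "h \<in> Qp p"
  shows "padd p u (psub p h u) = h"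
proof
  fix n
  have "padd p u (psub p h u) n = rmod (u n + (h n - u n)) (of_nat p powi n)"
    unfolding padd_def psub_def by (rule rmod_add_right)
  also have "\<dots> = h n" using QpD[OF h, of n] by (simp add: rmod_id)
  finally show "padd p u (psub p h u) n = h n" .
qed

lemma padd_swap: "padd p (padd p x h) v = padd p (padd p x v) h"
  unfolding padd_def by (rule ext) (simp only: rmod_add_left rmod_add_right, simp add: ac_simps)

lemma padd_assoc_swap: "padd p y (padd p u v) = padd p (padd p y v) u"
  unfolding padd_def by (rule ext) (simp only: rmod_add_left rmod_add_right, simp add: ac_simps)

definition ppow :: "nat \<Rightarrow> int \<Rightarrow> (int \<Rightarrow> rat)" where
  "ppow p j = (\<lambda>n. if j < n then of_nat p powi j else 0)"

lemma ppow_Qp: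
  assumes p: "p > 1"
  shows "ppow p j \<in> Qp p"
proof -
  have p1: "(1::rat) < of_nat p" using p by simp
  have reduced: "rmod (ppow p j n) (of_nat p powi n) = ppow p j n" for n
  proof (cases "j < n")
    case True
    then show ?thesis
      unfolding ppow_def using power_int_strict_increasing[OF True p1] p by (simp add: rmod_id)
  qed (simp add: ppow_def rmod_def)
  have "rmod (ppow p j (n+1)) (of_nat p powi n) = rmod (ppow p j n) (of_nat p powi n)" for n
    unfolding ppow_def by (cases "j = n") (auto simp: rmod_def)
  moreover have "ppow p j n = 0" if "n \<le> j" for n
    using that by (simp add: ppow_def)
  ultimately have "(\<lambda>n. rmod (ppow p j n) (of_nat p powi n)) \<in> Qp p"
    using p by (intro Qp_of_compatible_family) auto
  then show ?thesis unfolding reduced .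
qed

section \<open>Splitting an element outside a coset\<close>

lemma pcoset_truncation:
  assumes "w \<in> pcoset p a N"
  shows "w (-N) = rmod (a (-N)) (of_nat p powi (-N))"
  using assms unfolding pcoset_def padd_def in_pZp_def by auto

text \<open>Among the three distinct powers p^(n-1), p^(n-2), p^(n-3), one avoids
  any two given values.\<close>
lemma power_avoiding_two:
  assumes p: "p > 1"
  shows "\<exists>j<n. (of_nat p :: rat) powi j \<noteq> \<alpha> \<and> (of_nat p :: rat) powi j \<noteq> \<beta>"
proof (rule ccontr)
  define q where "q j = (of_nat p :: rat) powi j" for j
  assume "\<not> ?thesis"
  then have hit: "q j \<in> {\<alpha>, \<beta>}" if "j < n" for j
    using that unfolding q_def by blast
  have p1: "(1::rat) < of_nat p" using p by simp
  have lt: "i < j \<Longrightarrow> q i < q j" for i j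
    unfolding q_def using power_int_strict_increasing p1 by blast
  have "q (n-3) < q (n-2)" "q (n-2) < q (n-1)" using lt by simp_all
  moreover have "q (n-1) \<in> {\<alpha>, \<beta>}" "q (n-2) \<in> {\<alpha>, \<beta>}" "q (n-3) \<in> {\<alpha>, \<beta>}"
    using hit by simp_all
  ultimately show False by auto
qed

text \<open>Every h splits as u + v with both truncations at level n different from
  a prescribed value: take u = p^j for a power avoiding the two values that
  would make u or v = h - u hit it.\<close>
lemma split_avoiding_truncation:
  assumes p: "p > 1" and h: "h \<in> Qp p"
  obtains u v where "u \<in> Qp p" "v \<in> Qp p" "padd p u v = h" "u n \<noteq> \<alpha>" "v n \<noteq> \<alpha>"
proof -
  have p1: "(1::rat) < of_nat p" using p by simp
  define m where "m = (of_nat p :: rat) powi n"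
  obtain j where j: "j < n" "(of_nat p :: rat) powi j \<noteq> \<alpha>"
      "(of_nat p :: rat) powi j \<noteq> rmod (h n - \<alpha>) m"
    using power_avoiding_two[OF p] by blast
  define c where "c = (of_nat p :: rat) powi j"
  have u_n: "ppow p j n = c" unfolding ppow_def c_def using j by simp
  have c_range: "0 \<le> c" "c < m"
    unfolding c_def m_def using power_int_strict_increasing[OF j(1) p1] p by simp_all
  have v_n: "psub p h (ppow p j) n \<noteq> \<alpha>"
  proof
    assume "psub p h (ppow p j) n = \<alpha>"
    hence "h n - \<alpha> = c + m * of_int \<lfloor>(h n - c)/m\<rfloor>"
      unfolding psub_def u_n m_def[symmetric] rmod_def by (simp add: algebra_simps)
    hence "rmod (h n - \<alpha>) m = c" using c_range by (simp add: rmod_shift rmod_id)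
    thus False using j(3) c_def by simp
  qed
  show ?thesis
  proof
    show "ppow p j \<in> Qp p" using ppow_Qp[OF p] .
    then show "psub p h (ppow p j) \<in> Qp p" using psub_Qp[OF _ h] p by simp
  qed (use padd_psub[OF h] u_n j(2) c_def v_n in auto)
qed

lemma split_outside_coset:
  assumes p: "p > 1" and h: "h \<in> Qp p"
  obtains u v where "u \<in> Qp p" "v \<in> Qp p" "padd p u v = h"
    "u \<notin> pcoset p a N" "v \<notin> pcoset p a N"
proof -
  obtain u v where "u \<in> Qp p" "v \<in> Qp p" "padd p u v = h"
      "u (-N) \<noteq> rmod (a (-N)) (of_nat p powi (-N))"
      "v (-N) \<noteq> rmod (a (-N)) (of_nat p powi (-N))"
    by (rule split_avoiding_truncation[OF p h])
  then show ?thesis using that pcoset_truncation by blast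
qed

section \<open>Additivity of iterated differences\<close>

lemma pdelta_append: "pdelta p (xs @ ys) f x = pdelta p xs (pdelta p ys f) x"
  by (induction xs arbitrary: x) auto

lemma pdelta_add: "pdelta p xs (\<lambda>y. F y + G y) x = pdelta p xs F x + pdelta p xs G x"
  by (induction xs arbitrary: x) (auto simp: algebra_simps)

lemma pdelta_shift: "pdelta p xs (\<lambda>y. F (padd p y v)) x = pdelta p xs F (padd p x v)"
  by (induction xs arbitrary: x) (auto simp: padd_swap)

lemma pdelta_split_step:
  "pdelta p (pre @ padd p u v # post) f x
   = pdelta p (pre @ u # post) f (padd p x v) + pdelta p (pre @ v # post) f x"
proof -
  define g where "g = pdelta p post f"
  have step: "\<And>w. pdelta p (w # post) f = (\<lambda>y. g (padd p y w) - g y)"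
    by (rule ext) (simp add: g_def)
  have "(\<lambda>y. g (padd p y (padd p u v)) - g y)
      = (\<lambda>y. (\<lambda>z. g (padd p z u) - g z) (padd p y v) + (g (padd p y v) - g y))"
    by (rule ext) (simp add: padd_assoc_swap)
  then have "pdelta p pre (\<lambda>y. g (padd p y (padd p u v)) - g y) x
     = pdelta p pre (\<lambda>z. g (padd p z u) - g z) (padd p x v)
       + pdelta p pre (\<lambda>y. g (padd p y v) - g y) x"
    by (simp only: pdelta_add pdelta_shift[of p pre "\<lambda>z. g (padd p z u) - g z" v x])
  then show ?thesis by (simp only: pdelta_append step)
qed

lemma pdelta_split_nth:
  assumes "k < length hs"
  shows "pdelta p (hs[k := padd p u v]) f x
   = pdelta p (hs[k := u]) f (padd p x v) + pdelta p (hs[k := v]) f x"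
  using assms by (simp add: upd_conv_take_nth_drop pdelta_split_step)

section \<open>Releasing the restricted steps one at a time\<close>

definition vanishes_from :: "nat \<Rightarrow> ((int \<Rightarrow> rat) \<Rightarrow> 'y::ab_group_add) \<Rightarrow> nat
    \<Rightarrow> (nat \<Rightarrow> int \<Rightarrow> rat) \<Rightarrow> (nat \<Rightarrow> int) \<Rightarrow> nat \<Rightarrow> bool" where
  "vanishes_from p f s a N k \<longleftrightarrow>
     (\<forall>x\<in>Qp p. \<forall>hs. length hs = s \<and> set hs \<subseteq> Qp p
        \<and> (\<forall>i<s. k \<le> i \<longrightarrow> hs ! i \<notin> pcoset p (a i) (N i)) \<longrightarrow> pdelta p hs f x = 0)"

text \<open>Split the k-th step h = u + v with u, v outside the k-th coset; both
  resulting differences vanish by hypothesis.\<close>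
lemma vanishes_from_Suc:
  assumes p: "p > 1" and k: "k < s" and IH: "vanishes_from p f s a N k"
  shows "vanishes_from p f s a N (Suc k)"
  unfolding vanishes_from_def
proof (intro ballI allI impI)
  fix x hs assume x: "x \<in> Qp p"
    and hs: "length hs = s \<and> set hs \<subseteq> Qp p \<and> (\<forall>i<s. Suc k \<le> i \<longrightarrow> hs ! i \<notin> pcoset p (a i) (N i))"
  then have "hs ! k \<in> Qp p" using k by auto
  then obtain u v where uv: "u \<in> Qp p" "v \<in> Qp p" "padd p u v = hs ! k"
      "u \<notin> pcoset p (a k) (N k)" "v \<notin> pcoset p (a k) (N k)"
    using split_outside_coset[OF p] by metis
  have replaced: "pdelta p (hs[k := w]) f y = 0"
    if "y \<in> Qp p" "w \<in> Qp p" "w \<notin> pcoset p (a k) (N k)" for y w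
  proof -
    have "length (hs[k := w]) = s" using hs by simp
    moreover have "set (hs[k := w]) \<subseteq> Qp p"
      using hs that(2) set_update_subset_insert[of hs k w] by blast
    moreover have "\<forall>i<s. k \<le> i \<longrightarrow> hs[k := w] ! i \<notin> pcoset p (a i) (N i)"
      using hs that(3) by (auto simp: nth_list_update)
    ultimately show ?thesis using IH that(1) unfolding vanishes_from_def by blast
  qed
  have "pdelta p hs f x = pdelta p (hs[k := padd p u v]) f x" using uv(3) by simp
  also have "\<dots> = pdelta p (hs[k := u]) f (padd p x v) + pdelta p (hs[k := v]) f x"
    using hs k by (intro pdelta_split_nth) simp
  also have "\<dots> = 0"
    using replaced[OF padd_Qp[OF _ x uv(2)] uv(1,4)] replaced[OF x uv(2,5)] p by simp
  finally show "pdelta p hs f x = 0" .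
qed

theorem theorem9:
  fixes p :: nat and s :: nat
    and scale :: "rat \<Rightarrow> 'y::ab_group_add \<Rightarrow> 'y"
    and f :: "(int \<Rightarrow> rat) \<Rightarrow> 'y"
    and N :: "nat \<Rightarrow> int" and a :: "nat \<Rightarrow> (int \<Rightarrow> rat)"
  assumes "prime p"
    and "vector_space scale"
    and "s \<ge> 1"
    and "\<forall>i<s. a i \<in> Qp p"
    and "\<forall>x\<in>Qp p. \<forall>hs. length hs = s \<and> set hs \<subseteq> Qp p
            \<and> (\<forall>i<s. hs ! i \<notin> pcoset p (a i) (N i)) \<longrightarrow> pdelta p hs f x = 0"
  shows "\<forall>x\<in>Qp p. \<forall>hs. length hs = s \<and> set hs \<subseteq> Qp p \<longrightarrow> pdelta p hs f x = 0"
proof -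
  have p: "p > 1" using assms(1) prime_gt_1_nat by blast
  have "vanishes_from p f s a N k" if "k \<le> s" for k
    using that
  proof (induction k)
    case 0 then show ?case using assms(5) unfolding vanishes_from_def by simp
  next
    case (Suc k) then show ?case using vanishes_from_Suc[OF p, of k s] by simp
  qed
  then have "vanishes_from p f s a N s" by simp
  then show ?thesis unfolding vanishes_from_def by auto
qed

end
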